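(* Let $P:\mathcal C^{op}\to\mathbf{Pos}$ and $Q:\mathcal D^{op}\to\mathbf{Pos}$ be doctrines and let $(L,\lambda):P\to Q$, $(R,\rho):Q\to P$ be 1-arrows of $\mathbf{IdxPos}$ forming an adjunction $(L,\lambda)\dashv(R,\rho)$ in $\mathbf{IdxPos}$ with unit $\eta:\mathrm{Id}_{\mathcal C}\Rightarrow RL$ and counit $\epsilon:LR\Rightarrow\mathrm{Id}_{\mathcal D}$. Then the natural transformation $\square=\lambda\cdot(P\eta^{op})\cdot(\rho L^{op}):Q\circ L^{op}\Rightarrow Q\circ L^{op}$, with components $$\square_X=\lambda_X\circ P(\eta_X)\circ\rho_{LX}:Q(LX)\to Q(LX),$$ is an interior operator on the doctrine $Q\circ L^{op}:\mathcal C^{op}\to\mathbf{Pos}$.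
   Context: A doctrine is a functor $P:\mathcal C^{op}\to\mathbf{Pos}$; for $t:X\to Y$, $P(t):PY\to PX$ is reindexing. In the 2-category $\mathbf{IdxPos}$, a 1-arrow $(F,f):P\to Q$ (with $P:\mathcal C^{op}\to\mathbf{Pos}$, $Q:\mathcal D^{op}\to\mathbf{Pos}$) is a functor $F:\mathcal C\to\mathcal D$ with a natural transformation $f:P\Rightarrow Q\circ F^{op}$; a 2-arrow $\theta:(F,f)\Rightarrow(F',f')$ is a natural transformation $\theta:F\Rightarrow F'$ with $f_X(\alpha)\le Q(\theta_X)(f'_X(\alpha))$ for all $X,\alpha$; composition of $(G,g)$ then $(F,f)$ is $(FG,(fG^{op})\cdot g)$ (components $f_{GX}\circ g_X$), and 2-arrows compose as natural transformations. An adjunction in $\mathbf{IdxPos}$ is in the usual 2-categorical sense; equivalently, $L\dashv R$ is an adjunction of categories with unit $\eta$, counit $\epsilon$, and $\alpha\le P(\eta_X)(\rho_{LX}(\lambda_X\alpha))$ for $\alpha\in PX$, $\lambda_{RY}(\rho_Y\beta)\le Q(\epsilon_Y)(\beta)$ for $\beta\in QY$. An interior operator on a doctrine $M:\mathcal C^{op}\to\mathbf{Pos}$ is a natural transformation $\square:M\Rightarrow M$ with $\square_X(\alpha)\le\alpha$ and $\square_X(\alpha)\le\square_X(\square_X(\alpha))$ for all $X$ and $\alpha\in MX$. *)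

theory Defs
  imports Main
begin

text \<open>hom X Y is the set of arrows X -> Y; cmp X Y Z g f is the composite g o f of
  f : X -> Y and g : Y -> Z; idt X is the identity on X.\<close>

record ('o, 'm) cat =
  ob  :: "'o set"
  hom :: "'o \<Rightarrow> 'o \<Rightarrow> 'm set"
  cmp :: "'o \<Rightarrow> 'o \<Rightarrow> 'o \<Rightarrow> 'm \<Rightarrow> 'm \<Rightarrow> 'm"
  idt :: "'o \<Rightarrow> 'm"

definition category :: "('o, 'm) cat \<Rightarrow> bool" where
  "category C \<longleftrightarrow>
     (\<forall>X\<in>ob C. idt C X \<in> hom C X X) \<and>
     (\<forall>X\<in>ob C. \<forall>Y\<in>ob C. \<forall>Z\<in>ob C. \<forall>f\<in>hom C X Y. \<forall>g\<in>hom C Y Z.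
        cmp C X Y Z g f \<in> hom C X Z) \<and>
     (\<forall>X\<in>ob C. \<forall>Y\<in>ob C. \<forall>f\<in>hom C X Y.
        cmp C X Y Y (idt C Y) f = f \<and> cmp C X X Y f (idt C X) = f) \<and>
     (\<forall>W\<in>ob C. \<forall>X\<in>ob C. \<forall>Y\<in>ob C. \<forall>Z\<in>ob C.
      \<forall>f\<in>hom C W X. \<forall>g\<in>hom C X Y. \<forall>h\<in>hom C Y Z.
        cmp C W Y Z h (cmp C W X Y g f) = cmp C W X Z (cmp C X Y Z h g) f)"

record ('o1, 'm1, 'o2, 'm2) ftr =
  fo :: "'o1 \<Rightarrow> 'o2"
  fa :: "'o1 \<Rightarrow> 'o1 \<Rightarrow> 'm1 \<Rightarrow> 'm2"

definition is_functor :: "('o1, 'm1) cat \<Rightarrow> ('o2, 'm2) cat \<Rightarrow> ('o1, 'm1, 'o2, 'm2) ftr \<Rightarrow> bool" where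
  "is_functor C D F \<longleftrightarrow> category C \<and> category D \<and>
     (\<forall>X\<in>ob C. fo F X \<in> ob D) \<and>
     (\<forall>X\<in>ob C. \<forall>Y\<in>ob C. \<forall>t\<in>hom C X Y. fa F X Y t \<in> hom D (fo F X) (fo F Y)) \<and>
     (\<forall>X\<in>ob C. fa F X X (idt C X) = idt D (fo F X)) \<and>
     (\<forall>X\<in>ob C. \<forall>Y\<in>ob C. \<forall>Z\<in>ob C. \<forall>f\<in>hom C X Y. \<forall>g\<in>hom C Y Z.
        fa F X Z (cmp C X Y Z g f) = cmp D (fo F X) (fo F Y) (fo F Z) (fa F Y Z g) (fa F X Y f))"

definition id_ftr :: "('o, 'm, 'o, 'm) ftr" where
  "id_ftr = \<lparr>fo = (\<lambda>X. X), fa = (\<lambda>X Y t. t)\<rparr>"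

definition comp_ftr :: "('o2, 'm2, 'o3, 'm3) ftr \<Rightarrow> ('o1, 'm1, 'o2, 'm2) ftr \<Rightarrow> ('o1, 'm1, 'o3, 'm3) ftr" where
  "comp_ftr F G = \<lparr>fo = (\<lambda>X. fo F (fo G X)),
                   fa = (\<lambda>X Y t. fa F (fo G X) (fo G Y) (fa G X Y t))\<rparr>"

definition nat_trans ::
  "('o1, 'm1) cat \<Rightarrow> ('o2, 'm2) cat \<Rightarrow> ('o1, 'm1, 'o2, 'm2) ftr \<Rightarrow> ('o1, 'm1, 'o2, 'm2) ftr
     \<Rightarrow> ('o1 \<Rightarrow> 'm2) \<Rightarrow> bool" where
  "nat_trans C D F G \<theta> \<longleftrightarrow> is_functor C D F \<and> is_functor C D G \<and>
     (\<forall>X\<in>ob C. \<theta> X \<in> hom D (fo F X) (fo G X)) \<and>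
     (\<forall>X\<in>ob C. \<forall>Y\<in>ob C. \<forall>t\<in>hom C X Y.
        cmp D (fo F X) (fo G X) (fo G Y) (fa G X Y t) (\<theta> X)
      = cmp D (fo F X) (fo F Y) (fo G Y) (\<theta> Y) (fa F X Y t))"

text \<open>car X is the underlying set of P X, le X its partial order, and
  re X Y t : P Y -> P X is the reindexing P(t) along t : X -> Y.\<close>

record ('o, 'm, 'e) doctr =
  car :: "'o \<Rightarrow> 'e set"
  le  :: "'o \<Rightarrow> 'e \<Rightarrow> 'e \<Rightarrow> bool"
  re  :: "'o \<Rightarrow> 'o \<Rightarrow> 'm \<Rightarrow> 'e \<Rightarrow> 'e"

definition poset_on :: "'e set \<Rightarrow> ('e \<Rightarrow> 'e \<Rightarrow> bool) \<Rightarrow> bool" where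
  "poset_on A r \<longleftrightarrow> (\<forall>a\<in>A. r a a) \<and> (\<forall>a\<in>A. \<forall>b\<in>A. r a b \<and> r b a \<longrightarrow> a = b) \<and>
     (\<forall>a\<in>A. \<forall>b\<in>A. \<forall>c\<in>A. r a b \<and> r b c \<longrightarrow> r a c)"

definition doctrine :: "('o, 'm) cat \<Rightarrow> ('o, 'm, 'e) doctr \<Rightarrow> bool" where
  "doctrine C P \<longleftrightarrow> category C \<and>
     (\<forall>X\<in>ob C. poset_on (car P X) (le P X)) \<and>
     (\<forall>X\<in>ob C. \<forall>Y\<in>ob C. \<forall>t\<in>hom C X Y. \<forall>a\<in>car P Y. re P X Y t a \<in> car P X) \<and>
     (\<forall>X\<in>ob C. \<forall>Y\<in>ob C. \<forall>t\<in>hom C X Y. \<forall>a\<in>car P Y. \<forall>b\<in>car P Y.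
        le P Y a b \<longrightarrow> le P X (re P X Y t a) (re P X Y t b)) \<and>
     (\<forall>X\<in>ob C. \<forall>a\<in>car P X. re P X X (idt C X) a = a) \<and>
     (\<forall>X\<in>ob C. \<forall>Y\<in>ob C. \<forall>Z\<in>ob C. \<forall>f\<in>hom C X Y. \<forall>g\<in>hom C Y Z. \<forall>a\<in>car P Z.
        re P X Z (cmp C X Y Z g f) a = re P X Y f (re P Y Z g a))"

definition pre_doctr :: "('o2, 'm2, 'e) doctr \<Rightarrow> ('o1, 'm1, 'o2, 'm2) ftr \<Rightarrow> ('o1, 'm1, 'e) doctr" where
  "pre_doctr Q F = \<lparr>car = (\<lambda>X. car Q (fo F X)), le = (\<lambda>X. le Q (fo F X)),
                    re = (\<lambda>X Y t. re Q (fo F X) (fo F Y) (fa F X Y t))\<rparr>"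

definition doctr_nat :: "('o, 'm) cat \<Rightarrow> ('o, 'm, 'e1) doctr \<Rightarrow> ('o, 'm, 'e2) doctr
     \<Rightarrow> ('o \<Rightarrow> 'e1 \<Rightarrow> 'e2) \<Rightarrow> bool" where
  "doctr_nat C P M f \<longleftrightarrow>
     (\<forall>X\<in>ob C. \<forall>a\<in>car P X. f X a \<in> car M X) \<and>
     (\<forall>X\<in>ob C. \<forall>a\<in>car P X. \<forall>b\<in>car P X. le P X a b \<longrightarrow> le M X (f X a) (f X b)) \<and>
     (\<forall>X\<in>ob C. \<forall>Y\<in>ob C. \<forall>t\<in>hom C X Y. \<forall>a\<in>car P Y.
        f X (re P X Y t a) = re M X Y t (f Y a))"

definition one_arrow ::
  "('o1, 'm1) cat \<Rightarrow> ('o2, 'm2) cat \<Rightarrow> ('o1, 'm1, 'e1) doctr \<Rightarrow> ('o2, 'm2, 'e2) doctr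
     \<Rightarrow> ('o1, 'm1, 'o2, 'm2) ftr \<Rightarrow> ('o1 \<Rightarrow> 'e1 \<Rightarrow> 'e2) \<Rightarrow> bool" where
  "one_arrow C D P Q F f \<longleftrightarrow> doctrine C P \<and> doctrine D Q \<and> is_functor C D F \<and>
     doctr_nat C P (pre_doctr Q F) f"

definition id_comp :: "'o \<Rightarrow> 'e \<Rightarrow> 'e" where
  "id_comp = (\<lambda>X a. a)"

definition comp_comp :: "('o1, 'm1, 'o2, 'm2) ftr \<Rightarrow> ('o2 \<Rightarrow> 'e2 \<Rightarrow> 'e3) \<Rightarrow> ('o1 \<Rightarrow> 'e1 \<Rightarrow> 'e2)
     \<Rightarrow> ('o1 \<Rightarrow> 'e1 \<Rightarrow> 'e3)" where
  "comp_comp G f g = (\<lambda>X a. f (fo G X) (g X a))"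

definition two_arrow ::
  "('o1, 'm1) cat \<Rightarrow> ('o2, 'm2) cat \<Rightarrow> ('o1, 'm1, 'e1) doctr \<Rightarrow> ('o2, 'm2, 'e2) doctr
     \<Rightarrow> ('o1, 'm1, 'o2, 'm2) ftr \<Rightarrow> ('o1 \<Rightarrow> 'e1 \<Rightarrow> 'e2)
     \<Rightarrow> ('o1, 'm1, 'o2, 'm2) ftr \<Rightarrow> ('o1 \<Rightarrow> 'e1 \<Rightarrow> 'e2)
     \<Rightarrow> ('o1 \<Rightarrow> 'm2) \<Rightarrow> bool" where
  "two_arrow C D P Q F f F' f' \<theta> \<longleftrightarrow>
     one_arrow C D P Q F f \<and> one_arrow C D P Q F' f' \<and> nat_trans C D F F' \<theta> \<and>
     (\<forall>X\<in>ob C. \<forall>a\<in>car P X.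
        le Q (fo F X) (f X a) (re Q (fo F X) (fo F' X) (\<theta> X) (f' X a)))"

text \<open>Adjunction (L,lam) -| (R,rho) in IdxPos with unit eta : Id => (R,rho)(L,lam)
  and counit eps : (L,lam)(R,rho) => Id, satisfying the triangle identities
  (equalities of 2-arrows, i.e. of their underlying natural transformations).\<close>
definition idxpos_adjunction ::
  "('o1, 'm1) cat \<Rightarrow> ('o2, 'm2) cat \<Rightarrow> ('o1, 'm1, 'e1) doctr \<Rightarrow> ('o2, 'm2, 'e2) doctr
     \<Rightarrow> ('o1, 'm1, 'o2, 'm2) ftr \<Rightarrow> ('o1 \<Rightarrow> 'e1 \<Rightarrow> 'e2)
     \<Rightarrow> ('o2, 'm2, 'o1, 'm1) ftr \<Rightarrow> ('o2 \<Rightarrow> 'e2 \<Rightarrow> 'e1)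
     \<Rightarrow> ('o1 \<Rightarrow> 'm1) \<Rightarrow> ('o2 \<Rightarrow> 'm2) \<Rightarrow> bool" where
  "idxpos_adjunction C D P Q L lam R rho eta eps \<longleftrightarrow>
     one_arrow C D P Q L lam \<and> one_arrow D C Q P R rho \<and>
     two_arrow C C P P id_ftr id_comp (comp_ftr R L) (comp_comp L rho lam) eta \<and>
     two_arrow D D Q Q (comp_ftr L R) (comp_comp R lam rho) id_ftr id_comp eps \<and>
     (\<forall>X\<in>ob C.
        cmp D (fo L X) (fo L (fo R (fo L X))) (fo L X)
            (eps (fo L X)) (fa L X (fo R (fo L X)) (eta X)) = idt D (fo L X)) \<and>
     (\<forall>Y\<in>ob D.
        cmp C (fo R Y) (fo R (fo L (fo R Y))) (fo R Y)
            (fa R (fo L (fo R Y)) Y (eps Y)) (eta (fo R Y)) = idt C (fo R Y))"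

definition interior_operator :: "('o, 'm) cat \<Rightarrow> ('o, 'm, 'e) doctr \<Rightarrow> ('o \<Rightarrow> 'e \<Rightarrow> 'e) \<Rightarrow> bool" where
  "interior_operator C M box \<longleftrightarrow> doctr_nat C M M box \<and>
     (\<forall>X\<in>ob C. \<forall>a\<in>car M X. le M X (box X a) a) \<and>
     (\<forall>X\<in>ob C. \<forall>a\<in>car M X. le M X (box X a) (box X (box X a)))"

end

theory Submission
  imports Defs
begin

text \<open>The operator is the composite of three natural transformations of doctrines over \<open>C\<close>:
  \<open>\<rho>\<close> whiskered by \<open>L\<close>, reindexing along the unit, and \<open>\<lambda>\<close>; hence it is natural and monotone.
  It is deflationary because the counit inequality, reindexed along \<open>L \<eta>\<close>, collapses by the
  triangle identity \<open>\<epsilon>\<^sub>L\<^sub>X \<circ> L \<eta>\<^sub>X = id\<close>; and it is below its own square because the unit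
  inequality \<open>\<alpha> \<le> P\<eta>(\<rho>(\<lambda>\<alpha>))\<close> is preserved by the monotone map \<open>\<lambda>\<close>.\<close>

lemma doctrine_reindex_car:
  "doctrine C P \<Longrightarrow> X \<in> ob C \<Longrightarrow> Y \<in> ob C \<Longrightarrow> t \<in> hom C X Y \<Longrightarrow> a \<in> car P Y
     \<Longrightarrow> re P X Y t a \<in> car P X"
  unfolding doctrine_def by blast

lemma doctrine_reindex_mono:
  "doctrine C P \<Longrightarrow> X \<in> ob C \<Longrightarrow> Y \<in> ob C \<Longrightarrow> t \<in> hom C X Y \<Longrightarrow> a \<in> car P Y \<Longrightarrow> b \<in> car P Y
     \<Longrightarrow> le P Y a b \<Longrightarrow> le P X (re P X Y t a) (re P X Y t b)"
  unfolding doctrine_def by blast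

lemma doctrine_reindex_id:
  "doctrine C P \<Longrightarrow> X \<in> ob C \<Longrightarrow> a \<in> car P X \<Longrightarrow> re P X X (idt C X) a = a"
  unfolding doctrine_def by blast

lemma doctrine_reindex_comp:
  "doctrine C P \<Longrightarrow> X \<in> ob C \<Longrightarrow> Y \<in> ob C \<Longrightarrow> Z \<in> ob C \<Longrightarrow> f \<in> hom C X Y \<Longrightarrow> g \<in> hom C Y Z
     \<Longrightarrow> a \<in> car P Z \<Longrightarrow> re P X Z (cmp C X Y Z g f) a = re P X Y f (re P Y Z g a)"
  unfolding doctrine_def by blast

lemma functor_ob: "is_functor C D F \<Longrightarrow> X \<in> ob C \<Longrightarrow> fo F X \<in> ob D"
  unfolding is_functor_def by blast

lemma functor_hom:
  "is_functor C D F \<Longrightarrow> X \<in> ob C \<Longrightarrow> Y \<in> ob C \<Longrightarrow> t \<in> hom C X Y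
     \<Longrightarrow> fa F X Y t \<in> hom D (fo F X) (fo F Y)"
  unfolding is_functor_def by blast

lemma nat_trans_hom: "nat_trans C D F G \<theta> \<Longrightarrow> X \<in> ob C \<Longrightarrow> \<theta> X \<in> hom D (fo F X) (fo G X)"
  unfolding nat_trans_def by blast

lemma doctr_nat_car: "doctr_nat C P M f \<Longrightarrow> X \<in> ob C \<Longrightarrow> a \<in> car P X \<Longrightarrow> f X a \<in> car M X"
  unfolding doctr_nat_def by blast

lemma doctr_nat_mono:
  "doctr_nat C P M f \<Longrightarrow> X \<in> ob C \<Longrightarrow> a \<in> car P X \<Longrightarrow> b \<in> car P X \<Longrightarrow> le P X a b
     \<Longrightarrow> le M X (f X a) (f X b)"
  unfolding doctr_nat_def by blast

lemma doctr_nat_reindex: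
  "doctr_nat C P M f \<Longrightarrow> X \<in> ob C \<Longrightarrow> Y \<in> ob C \<Longrightarrow> t \<in> hom C X Y \<Longrightarrow> a \<in> car P Y
     \<Longrightarrow> f X (re P X Y t a) = re M X Y t (f Y a)"
  unfolding doctr_nat_def by blast

lemma doctr_nat_comp:
  assumes "doctr_nat C P M f" and "doctr_nat C M N g"
  shows "doctr_nat C P N (\<lambda>X a. g X (f X a))"
  using assms unfolding doctr_nat_def by simp

lemma doctr_nat_whisker:
  assumes "is_functor C D F" and "doctr_nat D Q M f"
  shows "doctr_nat C (pre_doctr Q F) (pre_doctr M F) (\<lambda>X. f (fo F X))"
  using assms unfolding doctr_nat_def pre_doctr_def
  by (simp add: functor_ob functor_hom)

lemma pre_doctr_comp_ftr: "pre_doctr P (comp_ftr R L) = pre_doctr (pre_doctr P R) L"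
  by (simp add: pre_doctr_def comp_ftr_def)

lemma pre_doctr_id_ftr: "pre_doctr P id_ftr = P"
  by (simp add: pre_doctr_def id_ftr_def)

lemma doctr_nat_reindex_nat_trans:
  assumes P: "doctrine C P" and \<theta>: "nat_trans C C G F \<theta>"
  shows "doctr_nat C (pre_doctr P F) (pre_doctr P G) (\<lambda>X. re P (fo G X) (fo F X) (\<theta> X))"
proof -
  have F: "is_functor C C F" and G: "is_functor C C G"
    using \<theta> unfolding nat_trans_def by blast+
  have natural: "re P (fo G X) (fo F X) (\<theta> X) (re P (fo F X) (fo F Y) (fa F X Y t) a)
      = re P (fo G X) (fo G Y) (fa G X Y t) (re P (fo G Y) (fo F Y) (\<theta> Y) a)"
    if X: "X \<in> ob C" and Y: "Y \<in> ob C" and t: "t \<in> hom C X Y" and a: "a \<in> car P (fo F Y)"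
    for X Y t a
  proof -
    have "re P (fo G X) (fo F X) (\<theta> X) (re P (fo F X) (fo F Y) (fa F X Y t) a)
        = re P (fo G X) (fo F Y) (cmp C (fo G X) (fo F X) (fo F Y) (fa F X Y t) (\<theta> X)) a"
      using doctrine_reindex_comp[OF P] X Y t a F G
      by (simp add: functor_ob functor_hom nat_trans_hom[OF \<theta>])
    also have "\<dots> = re P (fo G X) (fo F Y) (cmp C (fo G X) (fo G Y) (fo F Y) (\<theta> Y) (fa G X Y t)) a"
      using \<theta> X Y t unfolding nat_trans_def by simp
    also have "\<dots> = re P (fo G X) (fo G Y) (fa G X Y t) (re P (fo G Y) (fo F Y) (\<theta> Y) a)"
      using doctrine_reindex_comp[OF P] X Y t a F G
      by (simp add: functor_ob functor_hom nat_trans_hom[OF \<theta>])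
    finally show ?thesis .
  qed
  show ?thesis
    unfolding doctr_nat_def pre_doctr_def
    using F G natural
    by (simp add: functor_ob nat_trans_hom[OF \<theta>] doctrine_reindex_car[OF P]
        doctrine_reindex_mono[OF P])
qed

lemma idxpos_adjunction_unit_le:
  assumes "idxpos_adjunction C D P Q L lam R rho eta eps" and "X \<in> ob C" and "a \<in> car P X"
  shows "le P X a (re P X (fo R (fo L X)) (eta X) (rho (fo L X) (lam X a)))"
  using assms
  unfolding idxpos_adjunction_def two_arrow_def id_ftr_def comp_ftr_def comp_comp_def id_comp_def
  by simp

lemma idxpos_adjunction_counit_le:
  assumes "idxpos_adjunction C D P Q L lam R rho eta eps" and "Y \<in> ob D" and "b \<in> car Q Y"
  shows "le Q (fo L (fo R Y)) (lam (fo R Y) (rho Y b)) (re Q (fo L (fo R Y)) Y (eps Y) b)"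
  using assms
  unfolding idxpos_adjunction_def two_arrow_def id_ftr_def comp_ftr_def comp_comp_def id_comp_def
  by simp

lemma idxpos_adjunction_counit_unit_le:
  assumes adj: "idxpos_adjunction C D P Q L lam R rho eta eps"
    and X: "X \<in> ob C" and a: "a \<in> car Q (fo L X)"
  shows "le Q (fo L X) (lam X (re P X (fo R (fo L X)) (eta X) (rho (fo L X) a))) a"
proof -
  have "one_arrow C D P Q L lam" and "one_arrow D C Q P R rho"
    and unit: "two_arrow C C P P id_ftr id_comp (comp_ftr R L) (comp_comp L rho lam) eta"
    and counit: "two_arrow D D Q Q (comp_ftr L R) (comp_comp R lam rho) id_ftr id_comp eps"
    and triangle: "cmp D (fo L X) (fo L (fo R (fo L X))) (fo L X)
            (eps (fo L X)) (fa L X (fo R (fo L X)) (eta X)) = idt D (fo L X)"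
    using adj X unfolding idxpos_adjunction_def by blast+
  then have Q: "doctrine D Q" and L: "is_functor C D L" and R: "is_functor D C R"
    and lam: "doctr_nat C P (pre_doctr Q L) lam" and rho: "doctr_nat D Q (pre_doctr P R) rho"
    unfolding one_arrow_def by blast+
  let ?Y = "fo L X" and ?RY = "fo R (fo L X)" and ?LRY = "fo L (fo R (fo L X))"
  let ?L\<eta> = "fa L X ?RY (eta X)"
  have obs: "?Y \<in> ob D" "?RY \<in> ob C" "?LRY \<in> ob D"
    using X L R by (simp_all add: functor_ob)
  have \<eta>: "eta X \<in> hom C X ?RY" and \<epsilon>: "eps ?Y \<in> hom D ?LRY ?Y"
    using unit counit obs X
    unfolding two_arrow_def nat_trans_def id_ftr_def comp_ftr_def by simp_all
  have L\<eta>: "?L\<eta> \<in> hom D ?Y ?LRY"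
    using functor_hom[OF L X] obs \<eta> by simp
  have \<rho>a: "rho ?Y a \<in> car P ?RY"
    using doctr_nat_car[OF rho] obs a by (simp add: pre_doctr_def)
  have "lam X (re P X ?RY (eta X) (rho ?Y a)) = re Q ?Y ?LRY ?L\<eta> (lam ?RY (rho ?Y a))"
    using doctr_nat_reindex[OF lam X] obs \<eta> \<rho>a by (simp add: pre_doctr_def)
  also have "le Q ?Y \<dots> (re Q ?Y ?LRY ?L\<eta> (re Q ?LRY ?Y (eps ?Y) a))"
    using doctrine_reindex_mono[OF Q] idxpos_adjunction_counit_le[OF adj] doctr_nat_car[OF lam]
      doctrine_reindex_car[OF Q] obs L\<eta> \<epsilon> \<rho>a a
    by (simp add: pre_doctr_def)
  also have "re Q ?Y ?LRY ?L\<eta> (re Q ?LRY ?Y (eps ?Y) a) = a"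
    using doctrine_reindex_comp[OF Q, symmetric] doctrine_reindex_id[OF Q] triangle obs L\<eta> \<epsilon> a
    by simp
  finally show ?thesis .
qed

lemma idxpos_adjunction_doctr_nat_unit_rho:
  assumes "idxpos_adjunction C D P Q L lam R rho eta eps"
  shows "doctr_nat C (pre_doctr Q L) P (\<lambda>X a. re P X (fo R (fo L X)) (eta X) (rho (fo L X) a))"
proof -
  have P: "doctrine C P" and L: "is_functor C D L" and rho: "doctr_nat D Q (pre_doctr P R) rho"
    and eta: "nat_trans C C id_ftr (comp_ftr R L) eta"
    using assms unfolding idxpos_adjunction_def one_arrow_def two_arrow_def by blast+
  have "doctr_nat C (pre_doctr (pre_doctr P R) L) P (\<lambda>X. re P X (fo R (fo L X)) (eta X))"
    using doctr_nat_reindex_nat_trans[OF P eta]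
    unfolding pre_doctr_comp_ftr pre_doctr_id_ftr by (simp add: id_ftr_def comp_ftr_def)
  with doctr_nat_whisker[OF L rho] show ?thesis
    by (rule doctr_nat_comp)
qed

lemma idxpos_adjunction_le_iterate:
  assumes adj: "idxpos_adjunction C D P Q L lam R rho eta eps"
    and X: "X \<in> ob C" and a: "a \<in> car Q (fo L X)"
  defines "b \<equiv> re P X (fo R (fo L X)) (eta X) (rho (fo L X) a)"
  shows "le Q (fo L X) (lam X b) (lam X (re P X (fo R (fo L X)) (eta X) (rho (fo L X) (lam X b))))"
proof -
  have lam: "doctr_nat C P (pre_doctr Q L) lam"
    using adj unfolding idxpos_adjunction_def one_arrow_def by blast
  have reflect: "doctr_nat C (pre_doctr Q L) P (\<lambda>X a. re P X (fo R (fo L X)) (eta X) (rho (fo L X) a))"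
    using idxpos_adjunction_doctr_nat_unit_rho[OF adj] .
  have b: "b \<in> car P X"
    unfolding b_def using doctr_nat_car[OF reflect X] a by (simp add: pre_doctr_def)
  have "le P X b (re P X (fo R (fo L X)) (eta X) (rho (fo L X) (lam X b)))"
    using idxpos_adjunction_unit_le[OF adj X b] .
  then show ?thesis
    using doctr_nat_mono[OF lam X b] doctr_nat_car[OF reflect X] doctr_nat_car[OF lam X] b
    by (simp add: pre_doctr_def)
qed

theorem corollary5p11:
  fixes C :: "('o1, 'm1) cat" and D :: "('o2, 'm2) cat"
    and P :: "('o1, 'm1, 'e1) doctr" and Q :: "('o2, 'm2, 'e2) doctr"
    and L :: "('o1, 'm1, 'o2, 'm2) ftr" and lam :: "'o1 \<Rightarrow> 'e1 \<Rightarrow> 'e2"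
    and R :: "('o2, 'm2, 'o1, 'm1) ftr" and rho :: "'o2 \<Rightarrow> 'e2 \<Rightarrow> 'e1"
    and eta :: "'o1 \<Rightarrow> 'm1" and eps :: "'o2 \<Rightarrow> 'm2"
  assumes "idxpos_adjunction C D P Q L lam R rho eta eps"
  shows "interior_operator C (pre_doctr Q L)
           (\<lambda>X a. lam X (re P X (fo R (fo L X)) (eta X) (rho (fo L X) a)))"
proof -
  have lam: "doctr_nat C P (pre_doctr Q L) lam"
    using assms unfolding idxpos_adjunction_def one_arrow_def by blast
  show ?thesis
    unfolding interior_operator_def
    using doctr_nat_comp[OF idxpos_adjunction_doctr_nat_unit_rho[OF assms] lam]
      idxpos_adjunction_counit_unit_le[OF assms] idxpos_adjunction_le_iterate[OF assms]
    by (simp add: pre_doctr_def)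
qed

end
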